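(* Let $U=(E,\mathcal{D},\rho)$ be a U-matroid, $E=[n]$, with generous matroid extension $\hat U$. Then $\mathcal{B}(\hat U) = \mathrm{conv}(\mathcal{B}(U)\cap\{0,1\}^n) = \mathcal{B}(U)\cap[0,1]^n$, and $\mathcal{I}(\hat U) = \mathrm{conv}(\mathcal{A}(U)\cap\{0,1\}^n) = \mathcal{A}(U)\cap[0,1]^n$.
   Context: A U-matroid is a triple $(E,\mathcal{D},\rho)$ with $E$ finite, $\mathcal{D}\subseteq2^E$ an accessible distributive lattice of sets, and $\rho:\mathcal{D}\to\mathbb{N}$ with $\rho(\emptyset)=0$, monotone, submodular, with unit increase. Its submodular polyhedron is $\mathcal{A}(U)=\{\mathbf{x}\in\mathbb{R}^n:\mathbf{x}(A)\le\rho(A)\ \forall A\in\mathcal{D}\}$ and its base polyhedron is $\mathcal{B}(U)=\{\mathbf{x}\in\mathcal{A}(U):\mathbf{x}(E)=\rho(E)\}$, where $\mathbf{x}(A)=\sum_{a\in A}x_a$. For a matroid $M$, $\mathcal{I}(M)$ is its independence polytope, the convex hull of characteristic vectors of independent sets. The generous matroid extension $\hat U=(E,2^E,\hat\rho)$ is the matroid obtained by iterating the generous atom extension: for $a$ with $\{a\}\notin\mathcal{D}$, on $\mathcal{D}[a]=\mathcal{D}\cup\{S\cup a:S\in\mathcal{D}\}$ set $\rho_a(S)=\rho(S)$ if $S\in\mathcal{D}$, $\rho_a(S)=\rho(S-a)$ if $S\notin\mathcal{D}$ and $\rho(S-a)=\rho(\sup_\mathcal{D}(S))$, and $\rho_a(S)=\rho(S-a)+1$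 otherwise ($\sup_\mathcal{D}(S)$ = smallest element of $\mathcal{D}$ containing $S$), repeating until the lattice is $2^E$; $\hat\rho$ is independent of the order and dominates every matroid extension of $\rho$. *)

theory Defs
  imports "HOL-Analysis.Analysis"
begin

text \<open>Ground set E = [n] is modelled as the universe of a finite type 'n;
  vectors in R^n are elements of real^'n.\<close>

definition vsum_set :: "real^'n \<Rightarrow> 'n set \<Rightarrow> real" where
  "vsum_set x A = (\<Sum>a\<in>A. x $ a)"

definition char_vec :: "'n set \<Rightarrow> real^'n" where
  "char_vec A = (\<chi> i. if i \<in> A then 1 else 0)"

definition zero_one_vecs :: "(real^'n) set" where
  "zero_one_vecs = {x. \<forall>i. x $ i = 0 \<or> x $ i = 1}"

definition unit_cube :: "(real^'n) set" where
  "unit_cube = {x. \<forall>i. 0 \<le> x $ i \<and> x $ i \<le> 1}"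

definition accessible_distributive_lattice :: "'n set set \<Rightarrow> bool" where
  "accessible_distributive_lattice D \<longleftrightarrow>
     {} \<in> D \<and> UNIV \<in> D \<and>
     (\<forall>A\<in>D. \<forall>B\<in>D. A \<union> B \<in> D \<and> A \<inter> B \<in> D) \<and>
     (\<forall>A\<in>D. A \<noteq> {} \<longrightarrow> (\<exists>a\<in>A. A - {a} \<in> D))"

definition U_matroid :: "'n::finite set set \<Rightarrow> ('n set \<Rightarrow> nat) \<Rightarrow> bool" where
  "U_matroid D \<rho> \<longleftrightarrow>
     accessible_distributive_lattice D \<and>
     \<rho> {} = 0 \<and>
     (\<forall>A\<in>D. \<forall>B\<in>D. A \<subseteq> B \<longrightarrow> \<rho> A \<le> \<rho> B) \<and>
     (\<forall>A\<in>D. \<forall>B\<in>D. \<rho> (A \<union> B) + \<rho> (A \<inter> B) \<le> \<rho> A + \<rho> B) \<and>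
     (\<forall>A\<in>D. \<forall>a. insert a A \<in> D \<longrightarrow> \<rho> (insert a A) \<le> \<rho> A + 1)"

definition submod_polyhedron :: "'n::finite set set \<Rightarrow> ('n set \<Rightarrow> nat) \<Rightarrow> (real^'n) set" where
  "submod_polyhedron D \<rho> = {x. \<forall>A\<in>D. vsum_set x A \<le> real (\<rho> A)}"

definition base_polyhedron :: "'n::finite set set \<Rightarrow> ('n set \<Rightarrow> nat) \<Rightarrow> (real^'n) set" where
  "base_polyhedron D \<rho> = {x \<in> submod_polyhedron D \<rho>. vsum_set x UNIV = real (\<rho> UNIV)}"

definition indep_polytope :: "('n::finite set \<Rightarrow> nat) \<Rightarrow> (real^'n) set" where
  "indep_polytope r = convex hull (char_vec ` {I. r I = card I})"

definition sup_in :: "'n set set \<Rightarrow> 'n set \<Rightarrow> 'n set" where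
  "sup_in D S = \<Inter>{T \<in> D. S \<subseteq> T}"

definition lattice_ext :: "'n set set \<Rightarrow> 'n \<Rightarrow> 'n set set" where
  "lattice_ext D a = D \<union> {insert a S | S. S \<in> D}"

definition atom_ext :: "'n set set \<Rightarrow> ('n set \<Rightarrow> nat) \<Rightarrow> 'n \<Rightarrow> 'n set \<Rightarrow> nat" where
  "atom_ext D \<rho> a S =
     (if S \<in> D then \<rho> S
      else if \<rho> (S - {a}) = \<rho> (sup_in D S) then \<rho> (S - {a})
      else \<rho> (S - {a}) + 1)"

inductive gen_ext :: "'n set set \<Rightarrow> ('n set \<Rightarrow> nat) \<Rightarrow> 'n set set \<Rightarrow> ('n set \<Rightarrow> nat) \<Rightarrow> bool" where
  gen_refl: "gen_ext D \<rho> D \<rho>"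
| gen_step: "{a} \<notin> D \<Longrightarrow> gen_ext (lattice_ext D a) (atom_ext D \<rho> a) D' \<rho>' \<Longrightarrow> gen_ext D \<rho> D' \<rho>'"

text \<open>Generous matroid extension: iterate until the lattice is the full power set 2^E.\<close>
definition generous_matroid_extension :: "'n set set \<Rightarrow> ('n set \<Rightarrow> nat) \<Rightarrow> ('n set \<Rightarrow> nat) \<Rightarrow> bool" where
  "generous_matroid_extension D \<rho> \<rho>h \<longleftrightarrow> gen_ext D \<rho> UNIV \<rho>h"

end

theory Submission
  imports Defs
begin

text \<open>The generous extension has the rank function
  rk X = min over A in D of (rho A + |X - A|):
  every atom extension preserves the invariant that rho agrees with rk on the current lattice and
  that each rk X is attained by a member of that lattice. rk is a matroid rank function, a 0/1
  vector lies in A(U) iff its support is rk-independent, and inside the unit cube the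
  inequalities of A(U) are equivalent to those of rk. Hence the four sets of the theorem are the
  independence and base polytopes of the matroid rk, and Edmonds' greedy algorithm, which
  maximises every linear functional over them at a characteristic vector, identifies them with
  the convex hulls of their 0/1 points by a separation argument.\<close>

lemma decreasing_enumeration_exists:
  fixes f :: "'a::finite \<Rightarrow> real"
  shows "\<exists>e. bij_betw e {..<CARD('a)} UNIV \<and>
    (\<forall>i j. i \<le> j \<longrightarrow> j < CARD('a) \<longrightarrow> f (e j) \<le> f (e i))"
proof -
  obtain xs where xs: "set xs = (UNIV :: 'a set)" "distinct xs"
    using finite_distinct_list[of "UNIV :: 'a set"] by auto
  define ys where "ys = sort_key (\<lambda>a. - f a) xs"
  have ys: "set ys = UNIV" "distinct ys" "length ys = CARD('a)"
    using xs distinct_card[OF xs(2)] unfolding ys_def by auto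
  have sorted: "sorted (map (\<lambda>a. - f a) ys)"
    unfolding ys_def by simp
  have "bij_betw ((!) ys) {..<CARD('a)} UNIV"
    by (rule bij_betw_nth) (use ys in auto)
  moreover have "f (ys ! j) \<le> f (ys ! i)" if "i \<le> j" "j < CARD('a)" for i j
    using sorted_nth_mono[OF sorted, of i j] that ys(3) by simp
  ultimately show ?thesis
    by blast
qed

lemma sum_mult_le_if_prefix_sums_le:
  fixes c y z :: "nat \<Rightarrow> real"
  assumes "\<And>i. i < k \<Longrightarrow> 0 \<le> c i"
    and "\<And>i j. i \<le> j \<Longrightarrow> j < k \<Longrightarrow> c j \<le> c i"
    and "\<And>j. j \<le> k \<Longrightarrow> (\<Sum>i<j. y i) \<le> (\<Sum>i<j. z i)"
  shows "(\<Sum>i<k. c i * y i) \<le> (\<Sum>i<k. c i * z i)"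
  using assms
proof (induction k arbitrary: c)
  case 0
  then show ?case by simp
next
  case (Suc k)
  define d where "d i = c i - c k" for i
  have peel: "(\<Sum>i<Suc k. c i * u i) = (\<Sum>i<k. d i * u i) + c k * (\<Sum>i<Suc k. u i)"
    for u :: "nat \<Rightarrow> real"
    by (simp add: d_def algebra_simps sum_subtractf sum_distrib_left)
  have "(\<Sum>i<k. d i * y i) \<le> (\<Sum>i<k. d i * z i)"
    using Suc.prems by (intro Suc.IH) (auto simp: d_def)
  moreover have "c k * (\<Sum>i<Suc k. y i) \<le> c k * (\<Sum>i<Suc k. z i)"
    using Suc.prems(1)[of k] Suc.prems(3)[of "Suc k"] by (simp add: mult_left_mono)
  ultimately show ?case
    unfolding peel by linarith
qed

lemma convex_hull_eq_if_max_attained: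
  fixes P S :: "'a::euclidean_space set"
  assumes "convex P" and "S \<subseteq> P" and "compact S"
    and max: "\<And>w x. x \<in> P \<Longrightarrow> \<exists>s\<in>S. inner w x \<le> inner w s"
  shows "convex hull S = P"
proof
  show "convex hull S \<subseteq> P"
    using assms(1,2) by (rule hull_minimal[rotated])
  show "P \<subseteq> convex hull S"
  proof
    fix x assume "x \<in> P"
    show "x \<in> convex hull S"
    proof (rule ccontr)
      assume "x \<notin> convex hull S"
      moreover have "closed (convex hull S)"
        using assms(3) by (intro compact_imp_closed compact_convex_hull)
      ultimately obtain a b where "inner a x < b" "\<forall>z\<in>convex hull S. b < inner a z"
        using separating_hyperplane_closed_point[OF convex_convex_hull] by blast
      moreover obtain s where "s \<in> S" "inner (- a) x \<le> inner (- a) s"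
        using max[OF \<open>x \<in> P\<close>] by blast
      ultimately show False
        using hull_inc[of s S] by fastforce
    qed
  qed
qed

lemma card_Un_diff_add_card_Int_diff_le:
  assumes "finite X" and "finite Y"
  shows "card ((X \<union> Y) - (B \<union> C)) + card ((X \<inter> Y) - (B \<inter> C)) \<le> card (X - B) + card (Y - C)"
proof -
  let ?P = "(X \<union> Y) - (B \<union> C)" and ?Q = "(X \<inter> Y) - (B \<inter> C)"
  have "card ?P + card ?Q = card (?P \<union> ?Q) + card (?P \<inter> ?Q)"
    using assms by (intro card_Un_Int) auto
  also have "\<dots> \<le> card ((X - B) \<union> (Y - C)) + card ((X - B) \<inter> (Y - C))"
    using assms by (intro add_mono card_mono) auto
  also have "\<dots> = card (X - B) + card (Y - C)"
    using assms by (intro card_Un_Int[symmetric]) auto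
  finally show ?thesis .
qed

lemma vsum_set_eq_inner: "vsum_set x A = inner (char_vec A) x"
  unfolding vsum_set_def char_vec_def inner_vec_def by (simp add: of_bool_def[symmetric] sum.If_cases)

lemma vsum_set_char_vec: "vsum_set (char_vec I) A = real (card (I \<inter> A))"
  unfolding vsum_set_def char_vec_def by (simp add: sum.If_cases Int_commute)

lemma vsum_set_singleton: "vsum_set x {i} = x $ i"
  by (simp add: vsum_set_def)

lemma zero_one_vecs_eq_range_char_vec: "zero_one_vecs = range char_vec"
proof
  show "zero_one_vecs \<subseteq> range char_vec"
  proof
    fix x :: "real^'n" assume "x \<in> zero_one_vecs"
    then have "x = char_vec {i. x $ i = 1}"
      unfolding zero_one_vecs_def char_vec_def by (auto simp: vec_eq_iff)
    then show "x \<in> range char_vec" by blast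
  qed
qed (auto simp: zero_one_vecs_def char_vec_def)

lemma unit_cube_eq_cbox: "unit_cube = cbox 0 1"
  by (auto simp: unit_cube_def mem_box_cart)

lemma convex_submod_polyhedron: "convex (submod_polyhedron D \<rho>)"
proof -
  have "submod_polyhedron D \<rho> = (\<Inter>A\<in>D. {x. inner (char_vec A) x \<le> real (\<rho> A)})"
    by (auto simp: submod_polyhedron_def vsum_set_eq_inner)
  then show ?thesis
    by (simp add: convex_INT convex_halfspace_le)
qed

lemma convex_base_polyhedron: "convex (base_polyhedron D \<rho>)"
proof -
  have "base_polyhedron D \<rho> =
      submod_polyhedron D \<rho> \<inter> {x. inner (char_vec UNIV) x = real (\<rho> UNIV)}"
    by (auto simp: base_polyhedron_def vsum_set_eq_inner)
  then show ?thesis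
    by (simp add: convex_Int convex_submod_polyhedron convex_hyperplane)
qed

lemma vsum_set_mono_unit_cube: "x \<in> unit_cube \<Longrightarrow> X \<subseteq> Y \<Longrightarrow> vsum_set x X \<le> vsum_set x Y"
  unfolding vsum_set_def unit_cube_def by (rule sum_mono2) auto

lemma vsum_set_le_card_unit_cube: "x \<in> unit_cube \<Longrightarrow> vsum_set x X \<le> real (card X)"
  unfolding vsum_set_def unit_cube_def using sum_mono[of X "\<lambda>i. x $ i" "\<lambda>_. 1"] by auto

section \<open>Matroid rank functions and the greedy algorithm\<close>

locale matroid_rank =
  fixes r :: "'n::finite set \<Rightarrow> nat"
  assumes rank_empty: "r {} = 0"
    and rank_mono: "X \<subseteq> Y \<Longrightarrow> r X \<le> r Y"
    and rank_insert_le: "r (insert x X) \<le> r X + 1"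
    and rank_submod: "r (X \<union> Y) + r (X \<inter> Y) \<le> r X + r Y"
begin

lemma rank_le_diff: "r X \<le> r Y + card (X - Y)"
proof -
  have "r (Y \<union> Z) \<le> r Y + card Z" for Z
    using finite[of Z]
  proof (induction Z rule: finite_induct)
    case (insert z Z)
    have "r (Y \<union> insert z Z) \<le> r (Y \<union> Z) + 1"
      using rank_insert_le[of z "Y \<union> Z"] by simp
    with insert show ?case
      by simp
  qed simp
  moreover have "r X \<le> r (Y \<union> (X - Y))"
    by (rule rank_mono) auto
  ultimately show ?thesis
    by (meson order_trans)
qed

lemma rank_le_card: "r X \<le> card X"
  using rank_le_diff[of X "{}"] by (simp add: rank_empty)

lemma independent_subset:
  assumes "r I = card I" and "J \<subseteq> I"
  shows "r J = card J"
proof -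
  have "card I = card J + card (I - J)"
    using assms(2) by (metis card_Diff_subset card_mono finite le_add_diff_inverse)
  moreover have "r I \<le> r J + card (I - J)"
    by (rule rank_le_diff)
  ultimately show ?thesis
    using assms(1) rank_le_card[of J] by linarith
qed

lemma char_vec_independent_mem:
  assumes "r I = card I"
  shows "char_vec I \<in> submod_polyhedron UNIV r \<inter> unit_cube"
proof -
  have "card (I \<inter> X) \<le> r X" for X
    using independent_subset[OF assms, of "I \<inter> X"] rank_mono[of "I \<inter> X" X] by simp
  then have "char_vec I \<in> submod_polyhedron UNIV r"
    by (simp add: submod_polyhedron_def vsum_set_char_vec)
  moreover have "char_vec I \<in> unit_cube"
    by (simp add: unit_cube_def char_vec_def)
  ultimately show ?thesis
    by blast
qed

lemma base_polyhedron_subset_unit_cube: "base_polyhedron UNIV r \<subseteq> unit_cube"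
proof
  fix x assume x: "x \<in> base_polyhedron UNIV r"
  then have le: "vsum_set x X \<le> real (r X)" for X
    by (simp add: base_polyhedron_def submod_polyhedron_def)
  have "0 \<le> x $ i \<and> x $ i \<le> 1" for i
  proof
    show "x $ i \<le> 1"
      using le[of "{i}"] rank_le_card[of "{i}"] by (simp add: vsum_set_singleton)
    have "vsum_set x UNIV = vsum_set x (UNIV - {i}) + x $ i"
      by (simp add: vsum_set_def sum.remove[of UNIV i] add.commute)
    moreover have "r (UNIV - {i}) \<le> r UNIV"
      by (rule rank_mono) simp
    ultimately show "0 \<le> x $ i"
      using x le[of "UNIV - {i}"] by (simp add: base_polyhedron_def)
  qed
  then show "x \<in> unit_cube"
    by (simp add: unit_cube_def)
qed

end

locale greedy_order = matroid_rank r for r :: "'n::finite set \<Rightarrow> nat" +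
  fixes w :: "real^'n" and e :: "nat \<Rightarrow> 'n" and N :: nat
  assumes enum: "bij_betw e {..<N} UNIV"
    and weight_decreasing: "i \<le> j \<Longrightarrow> j < N \<Longrightarrow> w $ e j \<le> w $ e i"
begin

definition prefix :: "nat \<Rightarrow> 'n set" where
  "prefix j = e ` {..<j}"

definition greedy :: "nat \<Rightarrow> 'n set" where
  "greedy k = e ` {i. i < k \<and> r (prefix i) < r (prefix (Suc i))}"

lemma e_eq_iff: "i < N \<Longrightarrow> j < N \<Longrightarrow> e i = e j \<longleftrightarrow> i = j"
  using enum by (auto simp: bij_betw_def dest: inj_onD)

lemma prefix_Suc: "prefix (Suc j) = insert (e j) (prefix j)"
  by (simp add: prefix_def lessThan_Suc)

lemma prefix_N: "prefix N = UNIV"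
  using enum by (simp add: prefix_def bij_betw_def)

lemma e_notin_prefix: "j < N \<Longrightarrow> e j \<notin> prefix j"
  by (auto simp: prefix_def e_eq_iff)

lemma e_mem_greedy_iff:
  "j < N \<Longrightarrow> k \<le> N \<Longrightarrow> e j \<in> greedy k \<longleftrightarrow> j < k \<and> r (prefix j) < r (prefix (Suc j))"
  by (auto simp: greedy_def e_eq_iff)

lemma greedy_Suc:
  "greedy (Suc k) = (if r (prefix k) < r (prefix (Suc k)) then insert (e k) (greedy k) else greedy k)"
  by (auto simp: greedy_def less_Suc_eq)

lemma card_greedy_Int_le: "k \<le> N \<Longrightarrow> card (greedy k \<inter> X) \<le> r (X \<inter> prefix k)"
proof (induction k)
  case 0
  then show ?case by (simp add: greedy_def)
next
  case (Suc k)
  have IH: "card (greedy k \<inter> X) \<le> r (X \<inter> prefix k)"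
    using Suc by simp
  show ?case
  proof (cases "r (prefix k) < r (prefix (Suc k)) \<and> e k \<in> X")
    case True
    have "e k \<notin> greedy k"
      using e_mem_greedy_iff[of k k] Suc.prems by simp
    then have "card (greedy (Suc k) \<inter> X) = card (greedy k \<inter> X) + 1"
      using True by (simp add: greedy_Suc)
    moreover have "prefix k \<union> (X \<inter> prefix (Suc k)) = prefix (Suc k)"
      and "prefix k \<inter> (X \<inter> prefix (Suc k)) = X \<inter> prefix k"
      using True by (auto simp: prefix_Suc)
    then have "r (prefix (Suc k)) + r (X \<inter> prefix k) \<le> r (prefix k) + r (X \<inter> prefix (Suc k))"
      using rank_submod[of "prefix k" "X \<inter> prefix (Suc k)"] by simp
    ultimately show ?thesis
      using True IH by linarith
  next
    case False
    then have "greedy (Suc k) \<inter> X = greedy k \<inter> X"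
      by (auto simp: greedy_Suc)
    moreover have "r (X \<inter> prefix k) \<le> r (X \<inter> prefix (Suc k))"
      by (rule rank_mono) (auto simp: prefix_Suc)
    ultimately show ?thesis
      using IH by simp
  qed
qed

lemma greedy_independent: "k \<le> N \<Longrightarrow> r (greedy k) = card (greedy k)"
  using card_greedy_Int_le[of k "greedy k"] rank_mono[of "greedy k \<inter> prefix k" "greedy k"]
    rank_le_card[of "greedy k"] by simp

lemma card_greedy_Int_prefix: "j \<le> k \<Longrightarrow> k \<le> N \<Longrightarrow> card (greedy k \<inter> prefix j) = r (prefix j)"
proof (induction j)
  case 0
  then show ?case by (simp add: prefix_def rank_empty)
next
  case (Suc j)
  then have j: "j < N" "j < k"
    by auto
  have IH: "card (greedy k \<inter> prefix j) = r (prefix j)"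
    using Suc by simp
  have "r (prefix j) \<le> r (prefix (Suc j))" "r (prefix (Suc j)) \<le> r (prefix j) + 1"
    using rank_mono[of "prefix j"] rank_insert_le[of "e j" "prefix j"] by (auto simp: prefix_Suc)
  then show ?case
    using IH e_notin_prefix[OF j(1)] e_mem_greedy_iff[OF j(1) Suc.prems(2)] j(2)
    by (cases "r (prefix j) < r (prefix (Suc j))") (auto simp: prefix_Suc)
qed

lemma card_greedy_N: "card (greedy N) = r UNIV"
  using card_greedy_Int_prefix[of N N] by (simp add: prefix_N)

lemma sum_prefix: "j \<le> N \<Longrightarrow> (\<Sum>i<j. f (e i)) = sum f (prefix j)"
  unfolding prefix_def
  by (subst sum.reindex) (auto intro!: inj_on_subset[of e "{..<N}"] simp: e_eq_iff inj_on_def)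

lemma inner_eq_sum_enum: "inner v x = (\<Sum>i<N. v $ e i * x $ e i)"
  using sum_prefix[of N "\<lambda>a. v $ a * x $ a"] by (simp add: inner_vec_def prefix_N)

lemma prefix_sums_le_greedy:
  assumes "y \<in> submod_polyhedron UNIV r" and "j \<le> k" and "k \<le> N"
  shows "(\<Sum>i<j. y $ e i) \<le> (\<Sum>i<j. char_vec (greedy k) $ e i)"
proof -
  have "(\<Sum>i<j. y $ e i) = vsum_set y (prefix j)"
    using assms sum_prefix[of j "\<lambda>a. y $ a"] by (simp add: vsum_set_def)
  also have "\<dots> \<le> r (prefix j)"
    using assms(1) by (simp add: submod_polyhedron_def)
  also have "\<dots> = vsum_set (char_vec (greedy k)) (prefix j)"
    using card_greedy_Int_prefix[OF assms(2,3)] by (simp add: vsum_set_char_vec)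
  also have "\<dots> = (\<Sum>i<j. char_vec (greedy k) $ e i)"
    using assms sum_prefix[of j "\<lambda>a. char_vec (greedy k) $ a"] by (simp add: vsum_set_def)
  finally show ?thesis .
qed

lemma inner_le_greedy_nonneg:
  assumes y: "y \<in> submod_polyhedron UNIV r" and y_nonneg: "\<And>i. 0 \<le> y $ i"
  obtains k where "k \<le> N" and "inner w y \<le> inner w (char_vec (greedy k))"
proof -
  define k where "k = (LEAST i. i = N \<or> w $ e i \<le> 0)"
  have k: "k \<le> N"
    unfolding k_def by (rule Least_le) simp
  have k_nonpos: "k = N \<or> w $ e k \<le> 0"
    unfolding k_def by (rule LeastI[of _ N]) simp
  have pos: "i < k \<Longrightarrow> 0 < w $ e i" for i
    using not_less_Least[of i "\<lambda>i. i = N \<or> w $ e i \<le> 0"] k by (auto simp: k_def[symmetric])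
  have nonpos: "k \<le> i \<Longrightarrow> i < N \<Longrightarrow> w $ e i \<le> 0" for i
    using k_nonpos weight_decreasing[of k i] by auto
  have sum_split: "(\<Sum>i<N. f i) = (\<Sum>i<k. f i) + (\<Sum>i\<in>{k..<N}. f i)" for f :: "nat \<Rightarrow> real"
    using k by (metis atLeast0LessThan sum.atLeastLessThan_concat zero_le)
  let ?g = "char_vec (greedy k)"
  have "(\<Sum>i\<in>{k..<N}. w $ e i * y $ e i) \<le> 0"
    by (intro sum_nonpos) (simp add: mult_nonpos_nonneg nonpos y_nonneg)
  then have "inner w y \<le> (\<Sum>i<k. w $ e i * y $ e i)"
    using sum_split by (simp add: inner_eq_sum_enum)
  also have "\<dots> \<le> (\<Sum>i<k. w $ e i * ?g $ e i)"
    using pos weight_decreasing k prefix_sums_le_greedy[OF y _ k]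
    by (intro sum_mult_le_if_prefix_sums_le) (auto intro: less_imp_le)
  also have "\<dots> = inner w ?g"
  proof -
    have "?g $ e i = 0" if "i \<in> {k..<N}" for i
      using that e_mem_greedy_iff[of i k] k by (simp add: char_vec_def)
    then show ?thesis
      using sum_split by (simp add: inner_eq_sum_enum)
  qed
  finally show ?thesis
    using k that by blast
qed

lemma inner_le_greedy_base:
  assumes y: "y \<in> base_polyhedron UNIV r"
  shows "inner w y \<le> inner w (char_vec (greedy N))"
proof -
  \<comment> \<open>Shifting by the smallest weight m makes the weights nonnegative and changes both sides by
    m times the common total r UNIV.\<close>
  define m where "m = w $ e (N - 1)"
  have shift: "inner w x = (\<Sum>i<N. (w $ e i - m) * x $ e i) + m * vsum_set x UNIV"
    for x :: "real^'n"
    using sum_prefix[of N "\<lambda>a. x $ a", symmetric]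
    by (simp add: inner_eq_sum_enum vsum_set_def prefix_N left_diff_distrib sum_subtractf
        sum_distrib_left)
  have "y \<in> submod_polyhedron UNIV r"
    using y by (simp add: base_polyhedron_def)
  then have "(\<Sum>i<N. (w $ e i - m) * y $ e i) \<le> (\<Sum>i<N. (w $ e i - m) * char_vec (greedy N) $ e i)"
    using weight_decreasing prefix_sums_le_greedy
    by (intro sum_mult_le_if_prefix_sums_le) (auto simp: m_def)
  moreover have "vsum_set (char_vec (greedy N)) UNIV = vsum_set y UNIV"
    using y card_greedy_N by (simp add: vsum_set_char_vec base_polyhedron_def)
  ultimately show ?thesis
    by (simp add: shift)
qed

end

context matroid_rank
begin

lemma greedy_order_exists: "\<exists>e. greedy_order r w e CARD('n)"
  using decreasing_enumeration_exists[of "\<lambda>a. w $ a"]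
  by (metis greedy_order_axioms.intro greedy_order_def matroid_rank_axioms)

lemma convex_hull_independent_sets:
  "convex hull (char_vec ` {I. r I = card I}) = submod_polyhedron UNIV r \<inter> unit_cube"
proof (rule convex_hull_eq_if_max_attained)
  show "convex (submod_polyhedron UNIV r \<inter> unit_cube)"
    by (simp add: convex_Int convex_submod_polyhedron unit_cube_eq_cbox)
  show "char_vec ` {I. r I = card I} \<subseteq> submod_polyhedron UNIV r \<inter> unit_cube"
    using char_vec_independent_mem by blast
  show "compact (char_vec ` {I. r I = card I})"
    by (simp add: finite_imp_compact)
  fix w y assume y: "y \<in> submod_polyhedron UNIV r \<inter> unit_cube"
  obtain e where "greedy_order r w e CARD('n)"
    using greedy_order_exists by blast
  then interpret greedy_order r w e "CARD('n)" .
  obtain k where "k \<le> CARD('n)" "inner w y \<le> inner w (char_vec (greedy k))"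
    using inner_le_greedy_nonneg[of y] y by (auto simp: unit_cube_def)
  then show "\<exists>s\<in>char_vec ` {I. r I = card I}. inner w y \<le> inner w s"
    using greedy_independent by blast
qed

lemma convex_hull_bases:
  "convex hull (char_vec ` {B. r B = card B \<and> card B = r UNIV}) = base_polyhedron UNIV r"
proof (rule convex_hull_eq_if_max_attained)
  show "convex (base_polyhedron UNIV r)"
    by (rule convex_base_polyhedron)
  show "char_vec ` {B. r B = card B \<and> card B = r UNIV} \<subseteq> base_polyhedron UNIV r"
    using char_vec_independent_mem
    by (auto simp: base_polyhedron_def vsum_set_char_vec)
  show "compact (char_vec ` {B. r B = card B \<and> card B = r UNIV})"
    by (simp add: finite_imp_compact)
  fix w y assume y: "y \<in> base_polyhedron UNIV r"
  obtain e where "greedy_order r w e CARD('n)"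
    using greedy_order_exists by blast
  then interpret greedy_order r w e "CARD('n)" .
  show "\<exists>s\<in>char_vec ` {B. r B = card B \<and> card B = r UNIV}. inner w y \<le> inner w s"
    using inner_le_greedy_base[OF y] greedy_independent card_greedy_N by blast
qed

end

section \<open>Generous atom extensions\<close>

lemma sup_in_mem:
  fixes D :: "'n::finite set set"
  assumes "UNIV \<in> D" and "\<And>A B. A \<in> D \<Longrightarrow> B \<in> D \<Longrightarrow> A \<inter> B \<in> D"
  shows "sup_in D X \<in> D"
proof -
  have Inter_mem: "\<Inter>F \<in> D" if "F \<noteq> {}" "F \<subseteq> D" for F
    using finite[of F] that assms(2) by (induction F rule: finite_ne_induct) auto
  have "{T \<in> D. X \<subseteq> T} \<noteq> {}"
    using assms(1) by blast
  then show ?thesis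
    unfolding sup_in_def by (rule Inter_mem) blast
qed

lemma lattice_ext_closed:
  assumes "\<forall>A\<in>D. \<forall>B\<in>D. A \<union> B \<in> D \<and> A \<inter> B \<in> D"
    and "X \<in> lattice_ext D a" and "Y \<in> lattice_ext D a"
  shows "X \<union> Y \<in> lattice_ext D a \<and> X \<inter> Y \<in> lattice_ext D a"
proof -
  have sandwich: "Z \<in> lattice_ext D a" if "Z0 \<in> D" "Z0 \<subseteq> Z" "Z \<subseteq> insert a Z0" for Z Z0
  proof -
    have "Z = Z0 \<or> Z = insert a Z0"
      using that(2,3) by (cases "a \<in> Z") auto
    then show ?thesis
      using that(1) unfolding lattice_ext_def by blast
  qed
  obtain S T where ST: "S \<in> D" "T \<in> D"
    and X: "S \<subseteq> X" "X \<subseteq> insert a S" and Y: "T \<subseteq> Y" "Y \<subseteq> insert a T"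
    using assms(2,3) unfolding lattice_ext_def by blast
  have "X \<union> Y \<in> lattice_ext D a"
    by (rule sandwich[of "S \<union> T"]) (use assms(1) ST X Y in auto)
  moreover have "X \<inter> Y \<in> lattice_ext D a"
    by (rule sandwich[of "S \<inter> T"]) (use assms(1) ST X Y in auto)
  ultimately show ?thesis ..
qed

text \<open>Since a matroid rank function satisfies r X \<le> r B + card (X - B) for every B, the last
  conjunct says that r X is the minimum of r B + card (X - B) over B \<in> D: the pair (D, \<rho>)
  determines r.\<close>

definition presents_rank :: "'n::finite set set \<Rightarrow> ('n set \<Rightarrow> nat) \<Rightarrow> ('n set \<Rightarrow> nat) \<Rightarrow> bool"
  where "presents_rank D \<rho> r \<longleftrightarrow>
    UNIV \<in> D \<and> (\<forall>A\<in>D. \<forall>B\<in>D. A \<union> B \<in> D \<and> A \<inter> B \<in> D) \<and>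
    (\<forall>A\<in>D. \<rho> A = r A) \<and> (\<forall>X. \<exists>B\<in>D. r X = r B + card (X - B))"

context matroid_rank
begin

lemma rank_sup_in_le_if_rank_insert_eq:
  assumes P: "presents_rank D \<rho> r" and T: "T \<in> D" and "a \<notin> T"
    and keeps_rank: "r (insert a T) = r T"
  shows "r (sup_in D (insert a T)) \<le> r T"
proof -
  \<comment> \<open>The witness for insert a T must contain a, so the member B \<union> T of D contains insert a T.\<close>
  have "\<exists>B\<in>D. r (insert a T) = r B + card (insert a T - B)"
    using P by (simp add: presents_rank_def)
  then obtain B where B: "B \<in> D" "r (insert a T) = r B + card (insert a T - B)"
    by blast
  have "a \<in> B"
  proof (rule ccontr)
    assume "a \<notin> B"
    then have "card (insert a T - B) = card (T - B) + 1"
      using \<open>a \<notin> T\<close> by (simp add: insert_Diff_if)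
    then show False
      using keeps_rank B(2) rank_le_diff[of T B] by simp
  qed
  moreover have "B \<union> T \<in> D"
    using P B(1) T by (auto simp: presents_rank_def)
  ultimately have "sup_in D (insert a T) \<subseteq> B \<union> T"
    unfolding sup_in_def by blast
  then have "r (sup_in D (insert a T)) \<le> r (B \<union> T)"
    by (rule rank_mono)
  also have "\<dots> \<le> r B + card (B \<union> T - B)"
    by (rule rank_le_diff)
  also have "\<dots> = r T"
    using B(2) keeps_rank \<open>a \<in> B\<close> by (simp add: Un_Diff insert_Diff_if)
  finally show ?thesis .
qed

lemma atom_ext_insert_eq_rank:
  assumes P: "presents_rank D \<rho> r" and T: "T \<in> D" and notin: "insert a T \<notin> D"
  shows "atom_ext D \<rho> a (insert a T) = r (insert a T)"
proof -
  define X S where "X = insert a T" and "S = sup_in D X"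
  have lattice: "UNIV \<in> D" "\<forall>A\<in>D. \<forall>B\<in>D. A \<union> B \<in> D \<and> A \<inter> B \<in> D"
    and agree: "\<forall>A\<in>D. \<rho> A = r A"
    using P by (auto simp: presents_rank_def)
  have "a \<notin> T"
    using T notin by (metis insert_absorb)
  have S: "S \<in> D" "X \<subseteq> S"
    unfolding S_def using sup_in_mem[of D X] lattice by (auto simp: sup_in_def)
  have "X \<notin> D" "X - {a} = T"
    using notin \<open>a \<notin> T\<close> by (auto simp: X_def)
  then have ext: "atom_ext D \<rho> a X = (if r T = r S then r T else r T + 1)"
    using T S(1) agree by (simp add: atom_ext_def flip: S_def)
  have bounds: "r T \<le> r X" "r X \<le> r S" "r X \<le> r T + 1"
    using rank_mono[OF S(2)] rank_mono[of T X] rank_insert_le[of a T] by (auto simp: X_def)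
  have "atom_ext D \<rho> a X = r X"
  proof (cases "r T = r S")
    case True
    then show ?thesis
      using ext bounds by simp
  next
    case False
    then have "r X \<noteq> r T"
      using rank_sup_in_le_if_rank_insert_eq[OF P T \<open>a \<notin> T\<close>] bounds
      by (auto simp: X_def S_def)
    then show ?thesis
      using False ext bounds by simp
  qed
  then show ?thesis
    by (simp add: X_def)
qed

lemma presents_rank_atom_ext:
  assumes P: "presents_rank D \<rho> r"
  shows "presents_rank (lattice_ext D a) (atom_ext D \<rho> a) r"
  unfolding presents_rank_def
proof (intro conjI ballI allI)
  have lattice: "UNIV \<in> D" "\<forall>A\<in>D. \<forall>B\<in>D. A \<union> B \<in> D \<and> A \<inter> B \<in> D"
    and agree: "\<forall>A\<in>D. \<rho> A = r A" and witness: "\<forall>X. \<exists>B\<in>D. r X = r B + card (X - B)"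
    using P by (auto simp: presents_rank_def)
  show "UNIV \<in> lattice_ext D a"
    using lattice(1) by (simp add: lattice_ext_def)
  show "A \<union> B \<in> lattice_ext D a" "A \<inter> B \<in> lattice_ext D a"
    if "A \<in> lattice_ext D a" "B \<in> lattice_ext D a" for A B
    using lattice_ext_closed[OF lattice(2) that] by auto
  show "atom_ext D \<rho> a X = r X" if X: "X \<in> lattice_ext D a" for X
  proof (cases "X \<in> D")
    case True
    then show ?thesis
      using agree by (simp add: atom_ext_def)
  next
    case False
    then obtain T where "T \<in> D" "X = insert a T"
      using X by (auto simp: lattice_ext_def)
    then show ?thesis
      using atom_ext_insert_eq_rank[OF P] False by blast
  qed
  show "\<exists>B\<in>lattice_ext D a. r X = r B + card (X - B)" for X
    using witness unfolding lattice_ext_def by blast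
qed

lemma presents_rank_gen_ext:
  "gen_ext D \<rho> D' \<rho>' \<Longrightarrow> presents_rank D \<rho> r \<Longrightarrow> presents_rank D' \<rho>' r"
  by (induction rule: gen_ext.induct) (simp_all add: presents_rank_atom_ext)

end

section \<open>U-matroids\<close>

definition generous_rank :: "'n::finite set set \<Rightarrow> ('n set \<Rightarrow> nat) \<Rightarrow> 'n set \<Rightarrow> nat" where
  "generous_rank D \<rho> X = Min ((\<lambda>A. \<rho> A + card (X - A)) ` D)"

locale u_matroid =
  fixes D :: "'n::finite set set" and \<rho> :: "'n set \<Rightarrow> nat"
  assumes empty_mem: "{} \<in> D" and UNIV_mem: "UNIV \<in> D"
    and Un_mem: "A \<in> D \<Longrightarrow> B \<in> D \<Longrightarrow> A \<union> B \<in> D"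
    and Int_mem: "A \<in> D \<Longrightarrow> B \<in> D \<Longrightarrow> A \<inter> B \<in> D"
    and accessible: "A \<in> D \<Longrightarrow> A \<noteq> {} \<Longrightarrow> \<exists>a\<in>A. A - {a} \<in> D"
    and rho_empty: "\<rho> {} = 0"
    and rho_mono: "A \<in> D \<Longrightarrow> B \<in> D \<Longrightarrow> A \<subseteq> B \<Longrightarrow> \<rho> A \<le> \<rho> B"
    and rho_submod: "A \<in> D \<Longrightarrow> B \<in> D \<Longrightarrow> \<rho> (A \<union> B) + \<rho> (A \<inter> B) \<le> \<rho> A + \<rho> B"
    and rho_insert_le: "A \<in> D \<Longrightarrow> insert a A \<in> D \<Longrightarrow> \<rho> (insert a A) \<le> \<rho> A + 1"

lemma u_matroid_if_U_matroid: "U_matroid D \<rho> \<Longrightarrow> u_matroid D \<rho>"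
  unfolding U_matroid_def accessible_distributive_lattice_def by unfold_locales auto

context u_matroid
begin

abbreviation rk :: "'n set \<Rightarrow> nat" where
  "rk \<equiv> generous_rank D \<rho>"

lemma rk_le: "A \<in> D \<Longrightarrow> rk X \<le> \<rho> A + card (X - A)"
  unfolding generous_rank_def by (rule Min_le) auto

lemma rk_witness:
  obtains B where "B \<in> D" and "rk X = \<rho> B + card (X - B)"
proof -
  have "rk X \<in> (\<lambda>A. \<rho> A + card (X - A)) ` D"
    unfolding generous_rank_def using empty_mem by (intro Min_in) auto
  then show ?thesis
    using that by blast
qed

lemma rho_Un_le:
  assumes A: "A \<in> D" and B: "B \<in> D"
  shows "\<rho> (A \<union> B) \<le> \<rho> A + card (B - A)"
  using B
proof (induction "card B" arbitrary: B rule: less_induct)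
  case less
  show ?case
  proof (cases "B = {}")
    case False
    then obtain b where b: "b \<in> B" "B - {b} \<in> D"
      using accessible less.prems by blast
    have "card (B - {b}) < card B"
      using b(1) by (intro card_Diff1_less) auto
    then have IH: "\<rho> (A \<union> (B - {b})) \<le> \<rho> A + card (B - {b} - A)"
      using less.hyps b(2) by blast
    show ?thesis
    proof (cases "b \<in> A")
      case True
      then have "A \<union> (B - {b}) = A \<union> B" "B - {b} - A = B - A"
        by auto
      with IH show ?thesis
        by simp
    next
      case False
      have "A \<union> B = insert b (A \<union> (B - {b}))"
        using b(1) by auto
      then have "\<rho> (A \<union> B) \<le> \<rho> (A \<union> (B - {b})) + 1"
        using rho_insert_le[OF Un_mem[OF A b(2)], of b] Un_mem[OF A less.prems] by simp
      moreover have "B - A = insert b (B - {b} - A)"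
        using b(1) False by auto
      then have "card (B - A) = card (B - {b} - A) + 1"
        by simp
      ultimately show ?thesis
        using IH by simp
    qed
  qed simp
qed

lemma rk_eq_rho: "A \<in> D \<Longrightarrow> rk A = \<rho> A"
proof (rule antisym)
  assume A: "A \<in> D"
  show "rk A \<le> \<rho> A"
    using rk_le[OF A, of A] by simp
  obtain B where B: "B \<in> D" "rk A = \<rho> B + card (A - B)"
    by (rule rk_witness)
  have "\<rho> A \<le> \<rho> (B \<union> A)"
    using A B(1) by (intro rho_mono Un_mem) auto
  also have "\<dots> \<le> \<rho> B + card (A - B)"
    using rho_Un_le[OF B(1) A] .
  finally show "\<rho> A \<le> rk A"
    using B(2) by simp
qed

sublocale matroid_rank rk
proof
  show "rk {} = 0"
    using rk_le[OF empty_mem, of "{}"] rho_empty by simp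
  show "rk X \<le> rk Y" if "X \<subseteq> Y" for X Y
  proof -
    obtain B where "B \<in> D" "rk Y = \<rho> B + card (Y - B)"
      by (rule rk_witness)
    moreover have "card (X - B) \<le> card (Y - B)"
      using that by (intro card_mono) auto
    ultimately show ?thesis
      using rk_le[of B X] by simp
  qed
  show "rk (insert x X) \<le> rk X + 1" for x X
  proof -
    obtain B where B: "B \<in> D" "rk X = \<rho> B + card (X - B)"
      by (rule rk_witness)
    have "card (insert x X - B) \<le> card (insert x (X - B))"
      by (intro card_mono) auto
    also have "\<dots> \<le> card (X - B) + 1"
      by (simp add: card_insert_if)
    finally show ?thesis
      using rk_le[OF B(1), of "insert x X"] B(2) by simp
  qed
  show "rk (X \<union> Y) + rk (X \<inter> Y) \<le> rk X + rk Y" for X Y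
  proof -
    obtain B where B: "B \<in> D" "rk X = \<rho> B + card (X - B)"
      by (rule rk_witness)
    obtain C where C: "C \<in> D" "rk Y = \<rho> C + card (Y - C)"
      by (rule rk_witness)
    have "rk (X \<union> Y) \<le> \<rho> (B \<union> C) + card ((X \<union> Y) - (B \<union> C))"
      using B(1) C(1) by (intro rk_le Un_mem)
    moreover have "rk (X \<inter> Y) \<le> \<rho> (B \<inter> C) + card ((X \<inter> Y) - (B \<inter> C))"
      using B(1) C(1) by (intro rk_le Int_mem)
    ultimately show ?thesis
      using B C rho_submod[OF B(1) C(1)] card_Un_diff_add_card_Int_diff_le[of X Y B C]
      by simp
  qed
qed

lemma presents_rank_rk: "presents_rank D \<rho> rk"
  unfolding presents_rank_def
proof (intro conjI ballI allI)
  show "UNIV \<in> D"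
    by (rule UNIV_mem)
  show "A \<union> B \<in> D" "A \<inter> B \<in> D" if "A \<in> D" "B \<in> D" for A B
    using that by (simp_all add: Un_mem Int_mem)
  show "\<rho> A = rk A" if "A \<in> D" for A
    using rk_eq_rho[OF that] by simp
  show "\<exists>B\<in>D. rk X = rk B + card (X - B)" for X
    by (metis rk_eq_rho rk_witness)
qed

lemma generous_extension_eq_rk: "generous_matroid_extension D \<rho> \<rho>h \<Longrightarrow> \<rho>h = rk"
  unfolding generous_matroid_extension_def
  using presents_rank_gen_ext[OF _ presents_rank_rk] by (auto simp: presents_rank_def)

lemma submod_polyhedron_Int_unit_cube:
  "submod_polyhedron D \<rho> \<inter> unit_cube = submod_polyhedron UNIV rk \<inter> unit_cube"
proof (intro equalityI subsetI)
  fix x assume x: "x \<in> submod_polyhedron D \<rho> \<inter> unit_cube"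
  have "vsum_set x X \<le> real (rk X)" for X
  proof -
    obtain B where B: "B \<in> D" "rk X = \<rho> B + card (X - B)"
      by (rule rk_witness)
    have "vsum_set x X = vsum_set x (X \<inter> B) + vsum_set x (X - B)"
      unfolding vsum_set_def by (rule sum.Int_Diff) simp
    also have "\<dots> \<le> vsum_set x B + card (X - B)"
      using x by (intro add_mono vsum_set_mono_unit_cube vsum_set_le_card_unit_cube) auto
    also have "\<dots> \<le> \<rho> B + card (X - B)"
      using x B(1) by (simp add: submod_polyhedron_def)
    finally show ?thesis
      using B(2) by simp
  qed
  then show "x \<in> submod_polyhedron UNIV rk \<inter> unit_cube"
    using x by (simp add: submod_polyhedron_def)
next
  fix x assume x: "x \<in> submod_polyhedron UNIV rk \<inter> unit_cube"
  then have le_rk: "vsum_set x A \<le> real (rk A)" for A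
    by (simp add: submod_polyhedron_def)
  have "vsum_set x A \<le> real (\<rho> A)" if "A \<in> D" for A
    using le_rk[of A] rk_eq_rho[OF that] by simp
  then show "x \<in> submod_polyhedron D \<rho> \<inter> unit_cube"
    using x by (simp add: submod_polyhedron_def)
qed

lemma base_polyhedron_Int_unit_cube: "base_polyhedron D \<rho> \<inter> unit_cube = base_polyhedron UNIV rk"
  using submod_polyhedron_Int_unit_cube base_polyhedron_subset_unit_cube
  by (auto simp: base_polyhedron_def rk_eq_rho[OF UNIV_mem])

lemma char_vec_mem_submod_polyhedron_iff: "char_vec I \<in> submod_polyhedron D \<rho> \<longleftrightarrow> rk I = card I"
proof
  assume I: "char_vec I \<in> submod_polyhedron D \<rho>"
  obtain B where B: "B \<in> D" "rk I = \<rho> B + card (I - B)"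
    by (rule rk_witness)
  have "card (I \<inter> B) \<le> \<rho> B"
    using I B(1) by (simp add: submod_polyhedron_def vsum_set_char_vec)
  then have "card I \<le> rk I"
    using B(2) card_Int_Diff[of I B] by simp
  then show "rk I = card I"
    using rank_le_card[of I] by simp
next
  assume I: "rk I = card I"
  have "card (I \<inter> A) \<le> \<rho> A" if "A \<in> D" for A
    using rk_le[OF that, of I] I card_Int_Diff[of I A] by simp
  then show "char_vec I \<in> submod_polyhedron D \<rho>"
    by (simp add: submod_polyhedron_def vsum_set_char_vec)
qed

lemma submod_polyhedron_Int_zero_one:
  "submod_polyhedron D \<rho> \<inter> zero_one_vecs = char_vec ` {I. rk I = card I}"
  using char_vec_mem_submod_polyhedron_iff by (auto simp: zero_one_vecs_eq_range_char_vec)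

lemma base_polyhedron_Int_zero_one:
  "base_polyhedron D \<rho> \<inter> zero_one_vecs = char_vec ` {B. rk B = card B \<and> card B = rk UNIV}"
  using char_vec_mem_submod_polyhedron_iff
  by (auto simp: zero_one_vecs_eq_range_char_vec base_polyhedron_def vsum_set_char_vec
      rk_eq_rho[OF UNIV_mem])

end

theorem theorem4p14:
  fixes D :: "'n::finite set set" and \<rho> \<rho>h :: "'n set \<Rightarrow> nat"
  assumes "U_matroid D \<rho>"
    and "generous_matroid_extension D \<rho> \<rho>h"
  shows "base_polyhedron UNIV \<rho>h = convex hull (base_polyhedron D \<rho> \<inter> zero_one_vecs)
       \<and> convex hull (base_polyhedron D \<rho> \<inter> zero_one_vecs) = base_polyhedron D \<rho> \<inter> unit_cube
       \<and> indep_polytope \<rho>h = convex hull (submod_polyhedron D \<rho> \<inter> zero_one_vecs)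
       \<and> convex hull (submod_polyhedron D \<rho> \<inter> zero_one_vecs) = submod_polyhedron D \<rho> \<inter> unit_cube"
proof -
  interpret u_matroid D \<rho>
    using assms(1) by (rule u_matroid_if_U_matroid)
  have "\<rho>h = rk"
    using assms(2) by (rule generous_extension_eq_rk)
  then show ?thesis
    by (simp add: indep_polytope_def base_polyhedron_Int_zero_one submod_polyhedron_Int_zero_one
        convex_hull_bases convex_hull_independent_sets base_polyhedron_Int_unit_cube
        submod_polyhedron_Int_unit_cube)
qed

end
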